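(* Consider the single-armed lazy restless bandit described in the context with fixed subsidy $\eta$ and $p_{0,0}<p_{1,0}$, and let $b=\min\left\{1,\frac{R_1-R_0}{\rho_1-\rho_0}\right\}$. Then $\pi\mapsto V_S(\pi)-V_{NS}(\pi)$ is decreasing on $[0,1]$ under either of the following conditions: (1) for any $K>1$, when $0<p_{1,0}-p_{0,0}<b/5$ and $\beta\in(0,1)$; (2) for any $K>1$, when $\beta\in(0,b/5)$.
   Context: Single-armed lazy restless bandit: an arm has a hidden state in $\{0,1\}$ evolving as a two-state Markov chain with transition probabilities $p_{i,j}$ ($p_{i,0}+p_{i,1}=1$). During each session the chain makes exactly $K\ge1$ transitions. In each session the decision maker plays the arm or not. If played with the arm in state $i$ at session start, an ACK is received with probability $\rho_i\in[0,1]$ and the expected reward is $R_i$; if not played, subsidy $\eta$ is received and nothing observed. Discount $\beta\in(0,1)$. Standing assumptions: $\rho_0<\rho_1$, $R_0<R_1$. Belief $\pi\in[0,1]$ = probability of state $0$. $R_S(\pi)=\pi R_0+(1-\pi)R_1$, $\rho(\pi)=\pi\rho_0+(1-\pi)\rho_1$, $\gamma_1(\pi)=\frac{(1-\pi)\rho_1p_{1,0}+\pi\rho_0p_{0,0}}{\rho_1(1-\pi)+\rho_0\pi}$, $\gamma_0(\pi)=\frac{(1-\pi)(1-\rho_1)p_{1,0}+\pi(1-\rho_0)p_{0,0}}{(1-\rho_1)(1-\pi)+(1-\rho_0)\pi}$, $\gamma_2(\pi)=(p_{0,0}-p_{1,0})^K\pi+p_{1,0}\sum_{j=0}^{K-1}(p_{0,0}-p_{1,0})^j$.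 $V_S,V_{NS},V$ are the unique bounded solution of $V_S(\pi)=R_S(\pi)+\beta\big(\rho(\pi)V(\gamma_1(\pi))+(1-\rho(\pi))V(\gamma_0(\pi))\big)$, $V_{NS}(\pi)=\eta+\beta V(\gamma_2(\pi))$, $V(\pi)=\max\{V_S(\pi),V_{NS}(\pi)\}$ (a term with zero coefficient is taken to be $0$). *)

theory Defs
  imports "HOL-Analysis.Analysis"
begin

text \<open>Belief pi = probability of state 0.
  Parameters: p00 = p_{0,0}, p10 = p_{1,0} (so p_{0,1} = 1 - p00, p_{1,1} = 1 - p10),
  rho0, rho1 (ACK probabilities), R0, R1 (rewards), K (transitions per session).\<close>

definition R_S :: "real \<Rightarrow> real \<Rightarrow> real \<Rightarrow> real" where
  "R_S R0 R1 \<pi> = \<pi> * R0 + (1 - \<pi>) * R1"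

definition rho :: "real \<Rightarrow> real \<Rightarrow> real \<Rightarrow> real" where
  "rho \<rho>0 \<rho>1 \<pi> = \<pi> * \<rho>0 + (1 - \<pi>) * \<rho>1"

definition gamma1 :: "real \<Rightarrow> real \<Rightarrow> real \<Rightarrow> real \<Rightarrow> real \<Rightarrow> real" where
  "gamma1 p00 p10 \<rho>0 \<rho>1 \<pi> =
     ((1 - \<pi>) * \<rho>1 * p10 + \<pi> * \<rho>0 * p00) / (\<rho>1 * (1 - \<pi>) + \<rho>0 * \<pi>)"

definition gamma0 :: "real \<Rightarrow> real \<Rightarrow> real \<Rightarrow> real \<Rightarrow> real \<Rightarrow> real" where
  "gamma0 p00 p10 \<rho>0 \<rho>1 \<pi> =
     ((1 - \<pi>) * (1 - \<rho>1) * p10 + \<pi> * (1 - \<rho>0) * p00) /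
     ((1 - \<rho>1) * (1 - \<pi>) + (1 - \<rho>0) * \<pi>)"

definition gamma2 :: "real \<Rightarrow> real \<Rightarrow> nat \<Rightarrow> real \<Rightarrow> real" where
  "gamma2 p00 p10 K \<pi> = (p00 - p10) ^ K * \<pi> + p10 * (\<Sum>j<K. (p00 - p10) ^ j)"

text \<open>(VS, VNS, V) is a bounded solution on [0,1] of the Bellman equations.
  A term with zero coefficient contributes 0 automatically, since it is multiplied by 0.\<close>

definition bandit_solution ::
  "real \<Rightarrow> real \<Rightarrow> real \<Rightarrow> real \<Rightarrow> real \<Rightarrow> real \<Rightarrow> real \<Rightarrow> real \<Rightarrow> nat \<Rightarrow>
   (real \<Rightarrow> real) \<Rightarrow> (real \<Rightarrow> real) \<Rightarrow> (real \<Rightarrow> real) \<Rightarrow> bool" where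
  "bandit_solution p00 p10 \<rho>0 \<rho>1 R0 R1 \<eta> \<beta> K VS VNS V \<longleftrightarrow>
     bounded (VS ` {0..1}) \<and> bounded (VNS ` {0..1}) \<and> bounded (V ` {0..1}) \<and>
     (\<forall>\<pi>\<in>{0..1}.
        VS \<pi> = R_S R0 R1 \<pi> + \<beta> * (rho \<rho>0 \<rho>1 \<pi> * V (gamma1 p00 p10 \<rho>0 \<rho>1 \<pi>)
                 + (1 - rho \<rho>0 \<rho>1 \<pi>) * V (gamma0 p00 p10 \<rho>0 \<rho>1 \<pi>)) \<and>
        VNS \<pi> = \<eta> + \<beta> * V (gamma2 p00 p10 K \<pi>) \<and>
        V \<pi> = max (VS \<pi>) (VNS \<pi>))"

end

theory Submission
  imports Defs
begin

(*
  The value function V is Lipschitz on [0,1] with constant C = (R1 - R0) / (1 - beta delta),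
  where delta = p10 - p00.  Playing at beliefs x <= y, the posteriors after ACK and NACK can be
  coupled so that every matched pair is ordered and the transported distance is the difference
  of the expected next beliefs, delta (y - x); not playing moves beliefs by delta^K |x - y|.
  Hence one Bellman step turns a bound C |x - y| + e on the oscillation of V into C |x - y| + beta e,
  and iterating from the crude bound 2 sup |V| gives the Lipschitz bound.  With it, raising the
  belief lowers VS at rate at least R1 - R0 - beta delta C and raises VNS at rate at most
  beta delta C, so VS - VNS decreases as soon as 3 beta delta <= 1; either hypothesis of the
  theorem gives beta delta < 1/5.
*)

definition lipschitz_upto :: "real \<Rightarrow> real \<Rightarrow> (real \<Rightarrow> real) \<Rightarrow> bool" where
  "lipschitz_upto C e f \<longleftrightarrow> (\<forall>u\<in>{0..1}. \<forall>v\<in>{0..1}. \<bar>f u - f v\<bar> \<le> C * \<bar>u - v\<bar> + e)"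

lemma lipschitz_uptoI:
  "(\<And>u v. u \<in> {0..1} \<Longrightarrow> v \<in> {0..1} \<Longrightarrow> \<bar>f u - f v\<bar> \<le> C * \<bar>u - v\<bar> + e) \<Longrightarrow> lipschitz_upto C e f"
  unfolding lipschitz_upto_def by blast

lemma lipschitz_uptoD:
  "lipschitz_upto C e f \<Longrightarrow> u \<in> {0..1} \<Longrightarrow> v \<in> {0..1} \<Longrightarrow> \<bar>f u - f v\<bar> \<le> C * \<bar>u - v\<bar> + e"
  unfolding lipschitz_upto_def by blast

lemma le_of_le_plus_power:
  fixes a b \<beta> M :: real
  assumes le: "\<And>n. a \<le> b + \<beta> ^ n * M" and "0 \<le> \<beta>" "\<beta> < 1"
  shows "a \<le> b"
proof -
  have "(\<lambda>n. b + \<beta> ^ n * M) \<longlonglongrightarrow> b + 0 * M"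
    using assms by (intro tendsto_intros LIMSEQ_power_zero) auto
  then show ?thesis
    using le by (intro LIMSEQ_le_const) auto
qed

lemma lipschitz_upto_limit:
  assumes "\<And>n. lipschitz_upto C (\<beta> ^ n * M) f" and "0 \<le> \<beta>" "\<beta> < 1"
  shows "lipschitz_upto C 0 f"
proof (rule lipschitz_uptoI)
  fix u v :: real
  assume u: "u \<in> {0..1}" and v: "v \<in> {0..1}"
  have "\<bar>f u - f v\<bar> \<le> C * \<bar>u - v\<bar>"
    by (rule le_of_le_plus_power[OF lipschitz_uptoD[OF assms(1) u v] assms(2,3)])
  then show "\<bar>f u - f v\<bar> \<le> C * \<bar>u - v\<bar> + 0"
    by simp
qed

lemma lipschitz_upto_max:
  assumes "lipschitz_upto C e f" "lipschitz_upto C e g"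
    and "\<forall>x\<in>{0..1}. h x = max (f x) (g x)"
  shows "lipschitz_upto C e h"
  using assms unfolding lipschitz_upto_def by (fastforce simp: max_def abs_le_iff)

lemma lipschitz_upto_mono:
  assumes "lipschitz_upto C e f" "C \<le> C'"
  shows "lipschitz_upto C' e f"
proof (rule lipschitz_uptoI)
  fix u v :: real
  assume "u \<in> {0..1}" "v \<in> {0..1}"
  then have "\<bar>f u - f v\<bar> \<le> C * \<bar>u - v\<bar> + e"
    by (rule lipschitz_uptoD[OF assms(1)])
  moreover have "C * \<bar>u - v\<bar> \<le> C' * \<bar>u - v\<bar>"
    using assms(2) by (simp add: mult_right_mono)
  ultimately show "\<bar>f u - f v\<bar> \<le> C' * \<bar>u - v\<bar> + e"
    by linarith
qed

lemma lipschitz_upto_bounded: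
  assumes "\<forall>u\<in>{0..1}. \<bar>f u\<bar> \<le> M" "0 \<le> C"
  shows "lipschitz_upto C (2 * M) f"
proof (rule lipschitz_uptoI)
  fix u v :: real
  assume "u \<in> {0..1}" "v \<in> {0..1}"
  then have "\<bar>f u\<bar> \<le> M" "\<bar>f v\<bar> \<le> M"
    using assms(1) by auto
  then have "\<bar>f u - f v\<bar> \<le> 2 * M"
    using abs_triangle_ineq4[of "f u" "f v"] by linarith
  moreover have "0 \<le> C * \<bar>u - v\<bar>"
    using assms(2) by simp
  ultimately show "\<bar>f u - f v\<bar> \<le> C * \<bar>u - v\<bar> + 2 * M"
    by linarith
qed

lemma lipschitz_upto_scaled_diff:
  assumes "lipschitz_upto C e f" "0 \<le> C" "a \<in> {0..1}" "b \<in> {0..1}" "0 \<le> c" "0 \<le> c * (a - b)"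
  shows "\<bar>c * (f a - f b)\<bar> \<le> C * (c * (a - b)) + c * e"
proof -
  have "\<bar>c * (f a - f b)\<bar> = c * \<bar>f a - f b\<bar>"
    using \<open>0 \<le> c\<close> by (simp add: abs_mult)
  also have "\<dots> \<le> c * (C * \<bar>a - b\<bar> + e)"
    using assms lipschitz_uptoD by (intro mult_left_mono) auto
  also have "\<dots> = C * (c * \<bar>a - b\<bar>) + c * e"
    by (simp add: algebra_simps)
  also have "c * \<bar>a - b\<bar> = c * (a - b)"
    using \<open>0 \<le> c\<close> \<open>0 \<le> c * (a - b)\<close> by (metis abs_mult abs_of_nonneg)
  finally show ?thesis .
qed

lemma weighted_mean_in_unit:
  fixes a b p q :: real
  assumes "0 \<le> a" "0 \<le> b" "p \<in> {0..1}" "q \<in> {0..1}"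
  shows "(a * p + b * q) / (a + b) \<in> {0..1}"
proof -
  have "a * p \<le> a" "b * q \<le> b"
    using assms by (auto intro: mult_left_le)
  then show ?thesis
    using assms by (cases "a + b = 0") (auto simp: divide_le_eq_1)
qed

lemma weighted_mean_mono:
  fixes a b a' b' p q :: real
  assumes "0 < a + b" "0 < a' + b'" "q \<le> p" "a' * b \<le> a * b'"
  shows "(a' * p + b' * q) / (a' + b') \<le> (a * p + b * q) / (a + b)"
proof -
  have "(a * p + b * q) / (a + b) - (a' * p + b' * q) / (a' + b')
      = (p - q) * (a * b' - a' * b) / ((a + b) * (a' + b'))"
    using assms by (simp add: field_simps)
  also have "\<dots> \<ge> 0"
    using assms by simp
  finally show ?thesis
    by simp
qed

lemma gamma2_in_unit:
  assumes "p00 \<in> {0..1}" "p10 \<in> {0..1}" "\<pi> \<in> {0..1}"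
  shows "gamma2 p00 p10 K \<pi> \<in> {0..1}"
  using assms(3)
proof (induction K arbitrary: \<pi>)
  case 0
  then show ?case by (simp add: gamma2_def)
next
  case (Suc K)
  have step: "gamma2 p00 p10 (Suc K) \<pi> = gamma2 p00 p10 K (\<pi> * p00 + (1 - \<pi>) * p10)"
    unfolding gamma2_def by (simp add: algebra_simps)
  have "\<pi> * p00 + (1 - \<pi>) * p10 \<in> {0..1}"
    using weighted_mean_in_unit[of \<pi> "1 - \<pi>" p00 p10] assms Suc.prems by simp
  then show ?case
    using Suc.IH step by simp
qed

lemma gamma2_diff: "gamma2 p00 p10 K x - gamma2 p00 p10 K y = (p00 - p10) ^ K * (x - y)"
  unfolding gamma2_def by (simp add: algebra_simps)

locale belief_model =
  fixes p00 p10 \<rho>0 \<rho>1 :: real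
  assumes p00: "0 \<le> p00" "p00 \<le> p10" and p10: "p10 \<le> 1"
    and rho0: "0 \<le> \<rho>0" and rho_lt: "\<rho>0 < \<rho>1" and rho1: "\<rho>1 \<le> 1"
begin

abbreviation r :: "real \<Rightarrow> real" where "r \<equiv> rho \<rho>0 \<rho>1"
abbreviation \<gamma>1 :: "real \<Rightarrow> real" where "\<gamma>1 \<equiv> gamma1 p00 p10 \<rho>0 \<rho>1"
abbreviation \<gamma>0 :: "real \<Rightarrow> real" where "\<gamma>0 \<equiv> gamma0 p00 p10 \<rho>0 \<rho>1"

definition continuation :: "(real \<Rightarrow> real) \<Rightarrow> real \<Rightarrow> real" where
  "continuation V \<pi> = r \<pi> * V (\<gamma>1 \<pi>) + (1 - r \<pi>) * V (\<gamma>0 \<pi>)"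

lemma rho_eq: "r \<pi> = (1 - \<pi>) * \<rho>1 + \<pi> * \<rho>0"
  unfolding rho_def by simp

lemma one_minus_rho_eq: "1 - r \<pi> = (1 - \<pi>) * (1 - \<rho>1) + \<pi> * (1 - \<rho>0)"
  unfolding rho_def by (simp add: algebra_simps)

lemma gamma1_eq: "\<gamma>1 \<pi> = ((1 - \<pi>) * \<rho>1 * p10 + \<pi> * \<rho>0 * p00) / r \<pi>"
  unfolding gamma1_def rho_eq by (simp add: ac_simps)

lemma gamma0_eq: "\<gamma>0 \<pi> = ((1 - \<pi>) * (1 - \<rho>1) * p10 + \<pi> * (1 - \<rho>0) * p00) / (1 - r \<pi>)"
  unfolding gamma0_def one_minus_rho_eq by (simp add: ac_simps)

lemma rho_antimono:
  assumes "x \<le> y"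
  shows "r y \<le> r x"
proof -
  have "r x - r y = (y - x) * (\<rho>1 - \<rho>0)"
    unfolding rho_def by (simp add: algebra_simps)
  moreover have "0 \<le> (y - x) * (\<rho>1 - \<rho>0)"
    using assms rho_lt by simp
  ultimately show ?thesis
    by linarith
qed

lemma rho_bounds:
  assumes "\<pi> \<in> {0..1}"
  shows "0 \<le> r \<pi> \<and> r \<pi> \<le> 1"
proof -
  have "0 \<le> 1 - r \<pi>"
    unfolding one_minus_rho_eq using assms rho_lt rho1 by simp
  moreover have "0 \<le> r \<pi>"
    unfolding rho_eq using assms rho0 rho_lt by simp
  ultimately show ?thesis
    by simp
qed

text \<open>This also holds where \<open>r \<pi> = 0\<close>: the division in \<open>gamma1\<close> then returns 0 and the
  numerator vanishes as well; likewise for \<open>gamma0\<close> where \<open>r \<pi> = 1\<close>.\<close>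

lemma rho_mult_gamma1:
  assumes "\<pi> \<in> {0..1}"
  shows "r \<pi> * \<gamma>1 \<pi> = (1 - \<pi>) * \<rho>1 * p10 + \<pi> * \<rho>0 * p00"
proof (cases "r \<pi> = 0")
  case True
  have "(1 - \<pi>) * \<rho>1 = 0" "\<pi> * \<rho>0 = 0"
    using True assms rho0 rho_lt unfolding rho_eq by (auto simp: add_nonneg_eq_0_iff)
  then show ?thesis
    by (simp only: True mult_zero_left add_0_left)
qed (simp add: gamma1_eq)

lemma one_minus_rho_mult_gamma0:
  assumes "\<pi> \<in> {0..1}"
  shows "(1 - r \<pi>) * \<gamma>0 \<pi> = (1 - \<pi>) * (1 - \<rho>1) * p10 + \<pi> * (1 - \<rho>0) * p00"
proof (cases "1 - r \<pi> = 0")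
  case True
  have "(1 - \<pi>) * (1 - \<rho>1) = 0" "\<pi> * (1 - \<rho>0) = 0"
    using True assms rho1 rho_lt unfolding one_minus_rho_eq by (auto simp: add_nonneg_eq_0_iff)
  then show ?thesis
    by (simp only: True mult_zero_left add_0_left)
qed (simp add: gamma0_eq)

lemma expected_gamma:
  assumes "\<pi> \<in> {0..1}"
  shows "r \<pi> * \<gamma>1 \<pi> + (1 - r \<pi>) * \<gamma>0 \<pi> = \<pi> * p00 + (1 - \<pi>) * p10"
  unfolding rho_mult_gamma1[OF assms] one_minus_rho_mult_gamma0[OF assms] by (simp add: algebra_simps)

lemma gamma1_in_unit: "\<pi> \<in> {0..1} \<Longrightarrow> \<gamma>1 \<pi> \<in> {0..1}"
  unfolding gamma1_eq rho_eq
  using weighted_mean_in_unit[of "(1 - \<pi>) * \<rho>1" "\<pi> * \<rho>0" p10 p00] p00 p10 rho0 rho_lt by simp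

lemma gamma0_in_unit: "\<pi> \<in> {0..1} \<Longrightarrow> \<gamma>0 \<pi> \<in> {0..1}"
  unfolding gamma0_eq one_minus_rho_eq
  using weighted_mean_in_unit[of "(1 - \<pi>) * (1 - \<rho>1)" "\<pi> * (1 - \<rho>0)" p10 p00] p00 p10 rho1 rho_lt
  by simp

lemma gamma1_antimono:
  assumes "0 \<le> x" "x \<le> y" "y \<le> 1" "0 < r y"
  shows "\<gamma>1 y \<le> \<gamma>1 x"
  unfolding gamma1_eq rho_eq
proof (rule weighted_mean_mono)
  have "((1 - x) * \<rho>1) * (y * \<rho>0) - ((1 - y) * \<rho>1) * (x * \<rho>0) = \<rho>0 * \<rho>1 * (y - x)"
    by (simp add: algebra_simps)
  moreover have "0 \<le> \<rho>0 * \<rho>1 * (y - x)"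
    using assms rho0 rho_lt by simp
  ultimately show "(1 - y) * \<rho>1 * (x * \<rho>0) \<le> (1 - x) * \<rho>1 * (y * \<rho>0)"
    by linarith
  show "0 < (1 - x) * \<rho>1 + x * \<rho>0"
    using assms rho_antimono[of x y] rho_eq[of x] rho_eq[of y] by linarith
qed (use assms p00 in \<open>auto simp: rho_eq\<close>)

lemma gamma0_antimono:
  assumes "0 \<le> x" "x \<le> y" "y \<le> 1" "0 < 1 - r x"
  shows "\<gamma>0 y \<le> \<gamma>0 x"
  unfolding gamma0_eq one_minus_rho_eq
proof (rule weighted_mean_mono)
  have "((1 - x) * (1 - \<rho>1)) * (y * (1 - \<rho>0)) - ((1 - y) * (1 - \<rho>1)) * (x * (1 - \<rho>0))
      = (1 - \<rho>0) * (1 - \<rho>1) * (y - x)"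
    by (simp add: algebra_simps)
  moreover have "0 \<le> (1 - \<rho>0) * (1 - \<rho>1) * (y - x)"
    using assms rho1 rho_lt by simp
  ultimately show "(1 - y) * (1 - \<rho>1) * (x * (1 - \<rho>0)) \<le> (1 - x) * (1 - \<rho>1) * (y * (1 - \<rho>0))"
    by linarith
  show "0 < (1 - y) * (1 - \<rho>1) + y * (1 - \<rho>0)"
    using assms rho_antimono[of x y] one_minus_rho_eq[of x] one_minus_rho_eq[of y] by linarith
qed (use assms p00 in \<open>auto simp: one_minus_rho_eq\<close>)

lemma gamma0_le_gamma1:
  assumes "0 \<le> x" "x \<le> y" "y \<le> 1" "0 < r x" "0 < 1 - r y"
  shows "\<gamma>0 y \<le> \<gamma>1 x"
  unfolding gamma0_eq gamma1_eq one_minus_rho_eq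
  unfolding rho_eq
proof (rule weighted_mean_mono)
  have beliefs: "(1 - y) * x \<le> (1 - x) * y" and acks: "(1 - \<rho>1) * \<rho>0 \<le> \<rho>1 * (1 - \<rho>0)"
    using assms rho_lt by (simp_all add: algebra_simps)
  have "((1 - y) * x) * ((1 - \<rho>1) * \<rho>0) \<le> ((1 - x) * y) * (\<rho>1 * (1 - \<rho>0))"
    by (rule mult_mono[OF beliefs acks]) (use assms rho0 rho1 in simp_all)
  then show "(1 - y) * (1 - \<rho>1) * (x * \<rho>0) \<le> (1 - x) * \<rho>1 * (y * (1 - \<rho>0))"
    by (simp add: ac_simps)
  show "0 < (1 - y) * (1 - \<rho>1) + y * (1 - \<rho>0)"
    using assms one_minus_rho_eq[of y] by simp
qed (use assms p00 in \<open>auto simp: rho_eq\<close>)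

text \<open>Coupling: the two posterior distributions after playing at beliefs \<open>x \<le> y\<close> are matched
  pairwise (\<open>\<gamma>1 x\<close> with \<open>\<gamma>1 y\<close>, \<open>\<gamma>0 x\<close> with \<open>\<gamma>0 y\<close>, and the excess mass \<open>r x - r y\<close> of \<open>\<gamma>1 x\<close> with
  \<open>\<gamma>0 y\<close>); every matched pair is ordered, so the transported distance is the difference of the
  means, \<open>(p10 - p00) * (y - x)\<close>.\<close>

lemma coupling_ordered:
  assumes xy: "0 \<le> x" "x \<le> y" "y \<le> 1"
  shows "0 \<le> r y * (\<gamma>1 x - \<gamma>1 y)"
    and "0 \<le> (1 - r x) * (\<gamma>0 x - \<gamma>0 y)"
    and "0 \<le> (r x - r y) * (\<gamma>1 x - \<gamma>0 y)"
proof -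
  have ry_le: "r y \<le> r x" and ry0: "0 \<le> r y" and rx1: "r x \<le> 1"
    using rho_antimono[OF xy(2)] rho_bounds[of x] rho_bounds[of y] xy by auto
  show "0 \<le> r y * (\<gamma>1 x - \<gamma>1 y)"
  proof (cases "r y = 0")
    case False
    then show ?thesis
      using gamma1_antimono[OF xy] ry0 by simp
  qed simp
  show "0 \<le> (1 - r x) * (\<gamma>0 x - \<gamma>0 y)"
  proof (cases "r x = 1")
    case False
    then show ?thesis
      using gamma0_antimono[OF xy] rx1 by simp
  qed simp
  show "0 \<le> (r x - r y) * (\<gamma>1 x - \<gamma>0 y)"
  proof (cases "r x = r y")
    case False
    then show ?thesis
      using gamma0_le_gamma1[OF xy] ry_le ry0 rx1 by simp
  qed simp
qed

lemma coupling_transport: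
  assumes x: "x \<in> {0..1}" and y: "y \<in> {0..1}"
  shows "r y * (\<gamma>1 x - \<gamma>1 y) + (1 - r x) * (\<gamma>0 x - \<gamma>0 y) + (r x - r y) * (\<gamma>1 x - \<gamma>0 y)
      = (p10 - p00) * (y - x)"
proof -
  have "r y * (\<gamma>1 x - \<gamma>1 y) + (1 - r x) * (\<gamma>0 x - \<gamma>0 y) + (r x - r y) * (\<gamma>1 x - \<gamma>0 y)
      = (r x * \<gamma>1 x + (1 - r x) * \<gamma>0 x) - (r y * \<gamma>1 y + (1 - r y) * \<gamma>0 y)"
    by (simp add: algebra_simps)
  also have "\<dots> = (p10 - p00) * (y - x)"
    unfolding expected_gamma[OF x] expected_gamma[OF y] by (simp add: algebra_simps)
  finally show ?thesis .
qed

lemma continuation_diff_le: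
  assumes V: "lipschitz_upto C e V" "0 \<le> C" and xy: "0 \<le> x" "x \<le> y" "y \<le> 1"
  shows "\<bar>continuation V x - continuation V y\<bar> \<le> C * (p10 - p00) * (y - x) + e"
proof -
  have x: "x \<in> {0..1}" and y: "y \<in> {0..1}"
    using xy by auto
  note in_unit = gamma1_in_unit[OF x] gamma1_in_unit[OF y] gamma0_in_unit[OF x] gamma0_in_unit[OF y]
  have ry_le: "r y \<le> r x" and ry0: "0 \<le> r y" and rx1: "r x \<le> 1"
    using rho_antimono[OF xy(2)] rho_bounds[OF x] rho_bounds[OF y] by auto
  note ordered1 = coupling_ordered(1)[OF xy] and ordered0 = coupling_ordered(2)[OF xy]
    and ordered10 = coupling_ordered(3)[OF xy]
  have coupling: "continuation V x - continuation V y
      = r y * (V (\<gamma>1 x) - V (\<gamma>1 y)) + (1 - r x) * (V (\<gamma>0 x) - V (\<gamma>0 y))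
        + (r x - r y) * (V (\<gamma>1 x) - V (\<gamma>0 y))"
    unfolding continuation_def by (simp add: algebra_simps)
  have bound1: "\<bar>r y * (V (\<gamma>1 x) - V (\<gamma>1 y))\<bar> \<le> C * (r y * (\<gamma>1 x - \<gamma>1 y)) + r y * e"
    using in_unit ordered1 ry0 by (intro lipschitz_upto_scaled_diff[OF V]) auto
  have bound0: "\<bar>(1 - r x) * (V (\<gamma>0 x) - V (\<gamma>0 y))\<bar>
      \<le> C * ((1 - r x) * (\<gamma>0 x - \<gamma>0 y)) + (1 - r x) * e"
    using in_unit ordered0 rx1 by (intro lipschitz_upto_scaled_diff[OF V]) auto
  have bound10: "\<bar>(r x - r y) * (V (\<gamma>1 x) - V (\<gamma>0 y))\<bar>
      \<le> C * ((r x - r y) * (\<gamma>1 x - \<gamma>0 y)) + (r x - r y) * e"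
    using in_unit ordered10 ry_le by (intro lipschitz_upto_scaled_diff[OF V]) auto
  have "\<bar>continuation V x - continuation V y\<bar>
      \<le> \<bar>r y * (V (\<gamma>1 x) - V (\<gamma>1 y))\<bar> + \<bar>(1 - r x) * (V (\<gamma>0 x) - V (\<gamma>0 y))\<bar>
        + \<bar>(r x - r y) * (V (\<gamma>1 x) - V (\<gamma>0 y))\<bar>"
    unfolding coupling by (rule order_trans[OF abs_triangle_ineq add_right_mono[OF abs_triangle_ineq]])
  also have "\<dots> \<le> (C * (r y * (\<gamma>1 x - \<gamma>1 y)) + r y * e) + (C * ((1 - r x) * (\<gamma>0 x - \<gamma>0 y)) + (1 - r x) * e)
        + (C * ((r x - r y) * (\<gamma>1 x - \<gamma>0 y)) + (r x - r y) * e)"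
    by (rule add_mono[OF add_mono[OF bound1 bound0] bound10])
  also have "\<dots> = C * (r y * (\<gamma>1 x - \<gamma>1 y) + (1 - r x) * (\<gamma>0 x - \<gamma>0 y) + (r x - r y) * (\<gamma>1 x - \<gamma>0 y))
      + (r y + (1 - r x) + (r x - r y)) * e"
    by (simp add: algebra_simps)
  also have "\<dots> = C * (p10 - p00) * (y - x) + e"
    unfolding coupling_transport[OF x y] by simp
  finally show ?thesis .
qed

lemma continuation_lipschitz_upto:
  assumes "lipschitz_upto C e V" "0 \<le> C"
  shows "lipschitz_upto (C * (p10 - p00)) e (continuation V)"
proof (rule lipschitz_uptoI)
  fix u v :: real
  assume "u \<in> {0..1}" "v \<in> {0..1}"
  then show "\<bar>continuation V u - continuation V v\<bar> \<le> C * (p10 - p00) * \<bar>u - v\<bar> + e"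
    using continuation_diff_le[OF assms, of u v] continuation_diff_le[OF assms, of v u]
    by (cases "u \<le> v") (auto simp: abs_minus_commute)
qed

end

locale bandit_model = belief_model +
  fixes R0 R1 \<eta> \<beta> :: real and K :: nat and VS VNS V :: "real \<Rightarrow> real"
  assumes R_lt: "R0 < R1" and beta: "0 < \<beta>" "\<beta> < 1"
    and sol: "bandit_solution p00 p10 \<rho>0 \<rho>1 R0 R1 \<eta> \<beta> K VS VNS V"
begin

lemma bellman:
  assumes "\<pi> \<in> {0..1}"
  shows "VS \<pi> = R_S R0 R1 \<pi> + \<beta> * continuation V \<pi>"
    and "VNS \<pi> = \<eta> + \<beta> * V (gamma2 p00 p10 K \<pi>)"
    and "V \<pi> = max (VS \<pi>) (VNS \<pi>)"
  using sol assms unfolding bandit_solution_def continuation_def by blast+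

lemma V_bounded: "\<exists>M. \<forall>u\<in>{0..1}. \<bar>V u\<bar> \<le> M"
proof -
  have "bounded (V ` {0..1})"
    using sol unfolding bandit_solution_def by blast
  then show ?thesis
    unfolding bounded_iff by simp
qed

lemma gamma2_diff_abs: "\<bar>gamma2 p00 p10 K x - gamma2 p00 p10 K y\<bar> = (p10 - p00) ^ K * \<bar>x - y\<bar>"
  using p00 by (simp add: gamma2_diff abs_mult power_abs abs_minus_commute[of p00])

lemma VS_lipschitz_upto:
  assumes "lipschitz_upto C e V" "0 \<le> C"
  shows "lipschitz_upto (R1 - R0 + \<beta> * C * (p10 - p00)) (\<beta> * e) VS"
proof (rule lipschitz_uptoI)
  fix u v :: real
  assume u: "u \<in> {0..1}" and v: "v \<in> {0..1}"
  have "VS u - VS v = (R1 - R0) * (v - u) + \<beta> * (continuation V u - continuation V v)"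
    unfolding bellman(1)[OF u] bellman(1)[OF v] R_S_def by (simp add: algebra_simps)
  then have "\<bar>VS u - VS v\<bar>
      \<le> \<bar>(R1 - R0) * (v - u)\<bar> + \<bar>\<beta> * (continuation V u - continuation V v)\<bar>"
    by (simp only: abs_triangle_ineq)
  also have "\<dots> = (R1 - R0) * \<bar>u - v\<bar> + \<beta> * \<bar>continuation V u - continuation V v\<bar>"
    using R_lt beta by (simp add: abs_mult abs_minus_commute)
  also have "\<dots> \<le> (R1 - R0) * \<bar>u - v\<bar> + \<beta> * (C * (p10 - p00) * \<bar>u - v\<bar> + e)"
    using lipschitz_uptoD[OF continuation_lipschitz_upto[OF assms] u v] beta
    by (intro add_left_mono mult_left_mono) auto
  finally show "\<bar>VS u - VS v\<bar> \<le> (R1 - R0 + \<beta> * C * (p10 - p00)) * \<bar>u - v\<bar> + \<beta> * e"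
    by (simp add: algebra_simps)
qed

lemma VNS_lipschitz_upto:
  assumes "lipschitz_upto C e V" "0 \<le> C"
  shows "lipschitz_upto (\<beta> * C * (p10 - p00) ^ K) (\<beta> * e) VNS"
proof (rule lipschitz_uptoI)
  fix u v :: real
  assume u: "u \<in> {0..1}" and v: "v \<in> {0..1}"
  have "gamma2 p00 p10 K u \<in> {0..1}" "gamma2 p00 p10 K v \<in> {0..1}"
    using gamma2_in_unit p00 p10 u v by auto
  from lipschitz_uptoD[OF assms(1) this]
  have bound: "\<bar>V (gamma2 p00 p10 K u) - V (gamma2 p00 p10 K v)\<bar> \<le> C * ((p10 - p00) ^ K * \<bar>u - v\<bar>) + e"
    unfolding gamma2_diff_abs .
  have "VNS u - VNS v = \<beta> * (V (gamma2 p00 p10 K u) - V (gamma2 p00 p10 K v))"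
    unfolding bellman(2)[OF u] bellman(2)[OF v] by (simp add: algebra_simps)
  then have "\<bar>VNS u - VNS v\<bar> = \<beta> * \<bar>V (gamma2 p00 p10 K u) - V (gamma2 p00 p10 K v)\<bar>"
    using beta by (simp add: abs_mult)
  also have "\<dots> \<le> \<beta> * (C * ((p10 - p00) ^ K * \<bar>u - v\<bar>) + e)"
    using bound beta by (intro mult_left_mono) auto
  finally show "\<bar>VNS u - VNS v\<bar> \<le> \<beta> * C * (p10 - p00) ^ K * \<bar>u - v\<bar> + \<beta> * e"
    by (simp add: algebra_simps)
qed

lemma V_lipschitz_upto_step:
  assumes "lipschitz_upto C e V" "0 \<le> C" and C: "R1 - R0 + \<beta> * C * (p10 - p00) = C"
  shows "lipschitz_upto C (\<beta> * e) V"
proof (rule lipschitz_upto_max)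
  show "lipschitz_upto C (\<beta> * e) VS"
    using VS_lipschitz_upto[OF assms(1,2)] C by simp
  have "(p10 - p00) ^ K \<le> 1"
    using p00 p10 by (simp add: power_le_one)
  then have "C * (p10 - p00) ^ K \<le> C"
    using \<open>0 \<le> C\<close> by (rule mult_left_le)
  moreover have "\<beta> * (C * (p10 - p00) ^ K) \<le> C * (p10 - p00) ^ K"
    using beta \<open>0 \<le> C\<close> p00 by (intro mult_left_le_one_le) auto
  ultimately have "\<beta> * (C * (p10 - p00) ^ K) \<le> C"
    by linarith
  then show "lipschitz_upto C (\<beta> * e) VNS"
    using lipschitz_upto_mono[OF VNS_lipschitz_upto[OF assms(1,2)]] by (simp add: mult.assoc)
  show "\<forall>x\<in>{0..1}. V x = max (VS x) (VNS x)"
    using bellman(3) by blast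
qed

lemma V_lipschitz: "lipschitz_upto ((R1 - R0) / (1 - \<beta> * (p10 - p00))) 0 V"
proof -
  define C where "C = (R1 - R0) / (1 - \<beta> * (p10 - p00))"
  have "\<beta> * (p10 - p00) \<le> \<beta>"
    using beta p00 p10 by (simp add: mult_left_le)
  then have "\<beta> * (p10 - p00) < 1"
    using beta by linarith
  then have C0: "0 \<le> C" and C: "R1 - R0 + \<beta> * C * (p10 - p00) = C"
    using R_lt unfolding C_def by (simp_all add: field_simps)
  obtain M where M: "\<forall>u\<in>{0..1}. \<bar>V u\<bar> \<le> M"
    using V_bounded by blast
  have "lipschitz_upto C (\<beta> ^ n * (2 * M)) V" for n
  proof (induction n)
    case 0
    show ?case
      using lipschitz_upto_bounded[OF M C0] by simp
  next
    case (Suc n)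
    show ?case
      using V_lipschitz_upto_step[OF Suc C0 C] by (simp add: mult.assoc)
  qed
  then have "lipschitz_upto C 0 V"
    using beta by (intro lipschitz_upto_limit[of C \<beta> "2 * M" V]) auto
  then show ?thesis
    unfolding C_def .
qed

lemma advantage_antimono:
  assumes K: "1 \<le> K" and small: "3 * (\<beta> * (p10 - p00)) \<le> 1"
    and x: "x \<in> {0..1}" and y: "y \<in> {0..1}" and "x \<le> y"
  shows "VS y - VNS y \<le> VS x - VNS x"
proof -
  define \<delta> where "\<delta> = p10 - p00"
  define C where "C = (R1 - R0) / (1 - \<beta> * \<delta>)"
  have \<delta>: "0 \<le> \<delta>" "\<delta> \<le> 1"
    using p00 p10 unfolding \<delta>_def by auto
  have "\<beta> * \<delta> < 1"
    using small unfolding \<delta>_def by simp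
  then have C0: "0 \<le> C" and R_eq: "R1 - R0 = C * (1 - \<beta> * \<delta>)"
    using R_lt unfolding C_def by simp_all
  have lip: "lipschitz_upto C 0 V"
    using V_lipschitz unfolding C_def \<delta>_def .
  have "\<bar>continuation V y - continuation V x\<bar> \<le> C * \<delta> * \<bar>y - x\<bar> + 0"
    using lipschitz_uptoD[OF continuation_lipschitz_upto[OF lip C0] y x] unfolding \<delta>_def .
  then have "continuation V y - continuation V x \<le> C * \<delta> * (y - x)"
    using \<open>x \<le> y\<close> by simp
  then have "\<beta> * (continuation V y - continuation V x) \<le> \<beta> * (C * \<delta> * (y - x))"
    using beta by (intro mult_left_mono) auto
  moreover have "VS y - VS x = - (R1 - R0) * (y - x) + \<beta> * (continuation V y - continuation V x)"
    unfolding bellman(1)[OF y] bellman(1)[OF x] R_S_def by (simp add: algebra_simps)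
  ultimately have VS_drop: "VS y - VS x \<le> - (R1 - R0) * (y - x) + \<beta> * (C * \<delta> * (y - x))"
    by linarith
  have "\<delta> ^ K \<le> \<delta>"
    using power_decreasing[OF K \<delta>] by simp
  then have "\<beta> * C * \<delta> ^ K * \<bar>x - y\<bar> \<le> \<beta> * C * \<delta> * \<bar>x - y\<bar>"
    using beta C0 by (intro mult_right_mono mult_left_mono) auto
  also have "\<dots> = \<beta> * (C * \<delta> * (y - x))"
    using \<open>x \<le> y\<close> by simp
  moreover have "\<bar>VNS x - VNS y\<bar> \<le> \<beta> * C * \<delta> ^ K * \<bar>x - y\<bar> + \<beta> * 0"
    using lipschitz_uptoD[OF VNS_lipschitz_upto[OF lip C0] x y] unfolding \<delta>_def .
  ultimately have VNS_rise: "VNS x - VNS y \<le> \<beta> * (C * \<delta> * (y - x))"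
    by linarith
  have "2 * (\<beta> * (C * \<delta> * (y - x))) - (R1 - R0) * (y - x) = C * (3 * (\<beta> * \<delta>) - 1) * (y - x)"
    unfolding R_eq by (simp add: algebra_simps)
  also have "\<dots> \<le> 0"
    using C0 small \<open>x \<le> y\<close> unfolding \<delta>_def
    by (intro mult_nonpos_nonneg mult_nonneg_nonpos) auto
  finally show ?thesis
    using VS_drop VNS_rise by linarith
qed

end

theorem lemma6:
  fixes p00 p10 \<rho>0 \<rho>1 R0 R1 \<eta> \<beta> :: real and K :: nat
    and VS VNS V :: "real \<Rightarrow> real"
  assumes p00: "0 \<le> p00" "p00 \<le> 1" and p10: "0 \<le> p10" "p10 \<le> 1"
    and rho0: "0 \<le> \<rho>0" and rho1: "\<rho>1 \<le> 1" and rho_lt: "\<rho>0 < \<rho>1"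
    and R_lt: "R0 < R1"
    and beta: "0 < \<beta>" "\<beta> < 1"
    and K: "K > 1"
    and p_lt: "p00 < p10"
    and sol: "bandit_solution p00 p10 \<rho>0 \<rho>1 R0 R1 \<eta> \<beta> K VS VNS V"
    and cond: "p10 - p00 < min 1 ((R1 - R0) / (\<rho>1 - \<rho>0)) / 5
             \<or> \<beta> < min 1 ((R1 - R0) / (\<rho>1 - \<rho>0)) / 5"
  shows "\<forall>x\<in>{0..1}. \<forall>y\<in>{0..1}. x \<le> y \<longrightarrow> VS y - VNS y \<le> VS x - VNS x"
proof -
  interpret bandit_model p00 p10 \<rho>0 \<rho>1 R0 R1 \<eta> \<beta> K VS VNS V
    using p00(1) p10(2) rho0 rho1 rho_lt R_lt beta p_lt sol by unfold_locales auto
  define b where "b = min 1 ((R1 - R0) / (\<rho>1 - \<rho>0))"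
  have "b \<le> 1"
    unfolding b_def by simp
  moreover have "\<beta> * (p10 - p00) \<le> p10 - p00" "\<beta> * (p10 - p00) \<le> \<beta>"
    using beta p_lt p10 p00 by (simp_all add: mult_left_le_one_le mult_left_le)
  ultimately have small: "3 * (\<beta> * (p10 - p00)) \<le> 1"
    using cond unfolding b_def[symmetric] by linarith
  show ?thesis
  proof (intro ballI impI)
    fix x y :: real
    assume "x \<in> {0..1}" "y \<in> {0..1}" "x \<le> y"
    then show "VS y - VNS y \<le> VS x - VNS x"
      by (rule advantage_antimono[OF less_imp_le_nat[OF K] small])
  qed
qed

end
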